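(* Let $1<p<\infty$ and define $f:\mathbb{R}^2\to\mathbb{R}$ by $$f(x,y)=|x+y|^p-|x|^p-yp|x|^{p-1}\operatorname{sign}(x).$$ Then: (a) there is a constant $\Lambda>2$ such that $f(x,2y)\ge\Lambda f(x,y)$ for all $x,y\in\mathbb{R}$; (b) there is a constant $T>0$ such that $f(x,2y)\le Tf(x,y)$ for all $x,y\in\mathbb{R}$; (c) there is a constant $K>0$ such that $f(x,y)\le Kf(x,-y)$ for all $x,y\in\mathbb{R}$. *)

theory Defs
  imports Complex_Main
begin

definition fp :: "real \<Rightarrow> real \<Rightarrow> real \<Rightarrow> real" where
  "fp p x y = \<bar>x + y\<bar> powr p - \<bar>x\<bar> powr p - y * p * \<bar>x\<bar> powr (p - 1) * sgn x"

end

theory Submission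
  imports Defs "HOL-Real_Asymp.Real_Asymp" "HOL-Analysis.Elementary_Topology"
begin

text \<open>For \<open>x \<noteq> 0\<close> we have \<open>f(x,y) = |x|\<^sup>p g(y/x)\<close> with \<open>g(t) = |1+t|\<^sup>p - 1 - pt\<close>, and
  \<open>g(t) > 0\<close> for \<open>t \<noteq> 0\<close> by strict convexity of \<open>|u|\<^sup>p\<close>; on the line \<open>x = 0\<close> all three
  inequalities are trivial. So it suffices to bound the ratios \<open>g(2t)/g(t)\<close> and \<open>g(-t)/g(t)\<close>
  on \<open>t \<noteq> 0\<close>. They are continuous there and have finite limits at \<open>0\<close> (namely 4 and 1, as
  \<open>g(t) \<sim> p(p-1)t\<^sup>2/2\<close>) and at \<open>\<plusminus>\<infinity>\<close> (\<open>2\<^sup>p\<close> and 1), hence they are bounded. For (a),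
  the identity \<open>f(x,2y) - 2f(x,y) = f(x+y,y) + f(x+y,-y)\<close> makes the first ratio exceed 2, and a
  continuous function exceeding 2 whose limits also exceed 2 is bounded away from 2.\<close>

lemma eventually_off_compact_punctured_line:
  fixes a :: real
  assumes "eventually P (at a)" "eventually P at_top" "eventually P at_bot"
  obtains K where "compact K" "K \<noteq> {}" "a \<notin> K" "\<And>t. t \<noteq> a \<Longrightarrow> t \<notin> K \<Longrightarrow> P t"
proof -
  obtain \<delta> where \<delta>: "\<delta> > 0" "\<And>t. t \<noteq> a \<Longrightarrow> dist t a < \<delta> \<Longrightarrow> P t"
    using assms(1) unfolding eventually_at by blast
  obtain R where R: "\<And>t. t \<ge> R \<Longrightarrow> P t"
    using assms(2) unfolding eventually_at_top_linorder by blast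
  obtain L where L: "\<And>t. t \<le> L \<Longrightarrow> P t"
    using assms(3) unfolding eventually_at_bot_linorder by blast
  define K where "K = {min L (a - \<delta>)..a - \<delta>} \<union> {a + \<delta>..max R (a + \<delta>)}"
  show thesis
  proof
    show "compact K" "K \<noteq> {}" "a \<notin> K"
      using \<delta>(1) by (auto simp: K_def intro!: compact_Un)
    show "P t" if "t \<noteq> a" "t \<notin> K" for t
      using that \<delta>(2)[of t] R[of t] L[of t] by (auto simp: K_def dist_real_def)
  qed
qed

lemma continuous_on_punctured_line_bounded_above:
  fixes F :: "real \<Rightarrow> real"
  assumes "continuous_on (- {a}) F"
    and "(F \<longlongrightarrow> l_at) (at a)" "(F \<longlongrightarrow> l_top) at_top" "(F \<longlongrightarrow> l_bot) at_bot"
  obtains M where "\<And>t. t \<noteq> a \<Longrightarrow> F t \<le> M"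
proof -
  define m where "m = max l_at (max l_top l_bot) + 1"
  have "eventually (\<lambda>t. F t < m) F'" if "(F \<longlongrightarrow> l) F'" "l < m" for l F'
    using order_tendstoD(2)[OF that] .
  moreover have "l_at < m" "l_top < m" "l_bot < m"
    by (auto simp: m_def)
  ultimately obtain K where K: "compact K" "K \<noteq> {}" "a \<notin> K" "\<And>t. t \<noteq> a \<Longrightarrow> t \<notin> K \<Longrightarrow> F t < m"
    using eventually_off_compact_punctured_line assms(2-4) by metis
  obtain x where x: "x \<in> K" "\<And>y. y \<in> K \<Longrightarrow> F y \<le> F x"
    using continuous_attains_sup[OF K(1,2) continuous_on_subset[OF assms(1)]] K(3) by blast
  show thesis
  proof
    show "F t \<le> max m (F x)" if "t \<noteq> a" for t
      using K(4)[OF that] x(2)[of t] by (cases "t \<in> K") auto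
  qed
qed

lemma continuous_on_punctured_line_strict_lower_bound:
  fixes F :: "real \<Rightarrow> real"
  assumes "continuous_on (- {a}) F" and "\<And>t. t \<noteq> a \<Longrightarrow> F t > c"
    and "(F \<longlongrightarrow> l_at) (at a)" "(F \<longlongrightarrow> l_top) at_top" "(F \<longlongrightarrow> l_bot) at_bot"
    and "c < l_at" "c < l_top" "c < l_bot"
  obtains c' where "c < c'" "\<And>t. t \<noteq> a \<Longrightarrow> c' \<le> F t"
proof -
  define m where "m = (min l_at (min l_top l_bot) + c) / 2"
  have "eventually (\<lambda>t. m < F t) F'" if "(F \<longlongrightarrow> l) F'" "m < l" for l F'
    using order_tendstoD(1)[OF that] .
  moreover have "m < l_at" "m < l_top" "m < l_bot" "c < m"
    using assms(6-8) by (auto simp: m_def)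
  ultimately obtain K where K: "compact K" "K \<noteq> {}" "a \<notin> K" "\<And>t. t \<noteq> a \<Longrightarrow> t \<notin> K \<Longrightarrow> m < F t"
    using eventually_off_compact_punctured_line assms(3-5) by metis
  obtain x where x: "x \<in> K" "\<And>y. y \<in> K \<Longrightarrow> F x \<le> F y"
    using continuous_attains_inf[OF K(1,2) continuous_on_subset[OF assms(1)]] K(3) by blast
  show thesis
  proof
    show "c < min m (F x)" using \<open>c < m\<close> assms(2)[of x] x(1) K(3) by auto
    show "min m (F x) \<le> F t" if "t \<noteq> a" for t
      using K(4)[OF that] x(2)[of t] by (cases "t \<in> K") auto
  qed
qed

lemma fp_zero_left: "fp p 0 y = \<bar>y\<bar> powr p"
  by (simp add: fp_def)

lemma fp_one_left: "fp p 1 t = \<bar>1 + t\<bar> powr p - 1 - p * t"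
  by (simp add: fp_def)

lemma fp_homogeneous:
  assumes "x \<noteq> 0"
  shows "fp p x y = \<bar>x\<bar> powr p * fp p 1 (y / x)"
proof -
  have "\<bar>x + y\<bar> = \<bar>x\<bar> * \<bar>1 + y / x\<bar>"
    using assms by (simp add: abs_mult[symmetric] field_simps)
  then have "\<bar>x + y\<bar> powr p = \<bar>x\<bar> powr p * \<bar>1 + y / x\<bar> powr p"
    by (simp add: powr_mult)
  moreover have "y * p * \<bar>x\<bar> powr (p - 1) * sgn x = \<bar>x\<bar> powr p * (p * (y / x))"
    using assms by (cases "x > 0") (auto simp: powr_diff field_simps)
  ultimately show ?thesis
    by (simp add: fp_def algebra_simps)
qed

lemma abs_powr_gt_tangent_line:
  fixes u p :: real
  assumes p: "1 < p" and u: "u \<noteq> 1"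
  shows "1 + p * (u - 1) < \<bar>u\<bar> powr p"
proof (cases "u \<le> 0")
  case True
  have "p * (u - 1) \<le> p * (-1)" using True p by (intro mult_left_mono) auto
  moreover have "0 \<le> \<bar>u\<bar> powr p" by simp
  ultimately show ?thesis using p by linarith
next
  case False
  have deriv: "((\<lambda>z. z powr p) has_real_derivative p * z powr (p - 1)) (at z)" if "z > 0" for z
    using that by (rule has_real_derivative_powr)
  show ?thesis
  proof (cases "u > 1")
    case True
    have "\<exists>z. 1 < z \<and> z < u \<and> u powr p - 1 powr p = (u - 1) * (p * z powr (p - 1))"
      by (rule MVT2[OF True]) (rule deriv, simp)
    then obtain z where z: "1 < z" "z < u" "u powr p - 1 = (u - 1) * (p * z powr (p - 1))"
      by auto
    have "1 powr (p - 1) < z powr (p - 1)" using z p by (intro powr_less_mono2) auto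
    then have "p * (u - 1) < (u - 1) * (p * z powr (p - 1))" using True p by simp
    then show ?thesis using z(3) True by simp
  next
    case False
    then have "0 < u" "u < 1" using u \<open>\<not> u \<le> 0\<close> by auto
    have "\<exists>z. u < z \<and> z < 1 \<and> 1 powr p - u powr p = (1 - u) * (p * z powr (p - 1))"
      by (rule MVT2[OF \<open>u < 1\<close>]) (rule deriv, use \<open>0 < u\<close> in simp)
    then obtain z where z: "u < z" "z < 1" "1 - u powr p = (1 - u) * (p * z powr (p - 1))"
      by auto
    have "z powr (p - 1) < 1 powr (p - 1)" using z p \<open>0 < u\<close> by (intro powr_less_mono2) auto
    then have "(1 - u) * (p * z powr (p - 1)) < (1 - u) * p" using \<open>u < 1\<close> p by simp
    then show ?thesis using z(3) \<open>0 < u\<close> by (simp add: algebra_simps)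
  qed
qed

lemma fp_pos:
  assumes "1 < p" and "y \<noteq> 0"
  shows "0 < fp p x y"
proof (cases "x = 0")
  case True
  then show ?thesis using assms by (simp add: fp_zero_left)
next
  case False
  have "0 < fp p 1 (y / x)"
    using abs_powr_gt_tangent_line[OF assms(1), of "1 + y / x"] assms(2) False
    by (simp add: fp_one_left algebra_simps)
  then show ?thesis using fp_homogeneous[OF False] False by simp
qed

lemma fp_nonneg:
  assumes "1 < p"
  shows "0 \<le> fp p x y"
  using fp_pos[OF assms, of y x] by (cases "y = 0") (auto simp: fp_def)

lemma fp_double_gt:
  assumes "1 < p" and "y \<noteq> 0"
  shows "2 * fp p x y < fp p x (2 * y)"
proof -
  have "fp p x (2 * y) - 2 * fp p x y = fp p (x + y) y + fp p (x + y) (- y)"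
    by (simp add: fp_def algebra_simps)
  then show ?thesis
    using fp_pos[OF assms, of "x + y"] fp_pos[OF assms(1), of "- y" "x + y"] assms(2) by simp
qed

lemma continuous_on_fp:
  assumes "0 < p"
  shows "continuous_on A (fp p x)"
  unfolding fp_def[abs_def] using assms
  by (intro continuous_intros continuous_on_powr') auto

lemma fp_scaled_lower_bound:
  assumes p: "1 < p" and C: "C \<le> \<bar>s\<bar> powr p"
    and normalized: "\<And>t. t \<noteq> 0 \<Longrightarrow> C * fp p 1 t \<le> fp p 1 (s * t)"
  shows "C * fp p x y \<le> fp p x (s * y)"
proof (cases "x = 0")
  case True
  have "C * fp p 0 y \<le> \<bar>s\<bar> powr p * fp p 0 y"
    using C fp_nonneg[OF p] by (rule mult_right_mono)
  then show ?thesis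
    using True by (simp add: fp_zero_left abs_mult powr_mult)
next
  case False
  have "C * fp p 1 (y / x) \<le> fp p 1 (s * (y / x))"
    using normalized[of "y / x"] False by (cases "y = 0") (auto simp: fp_one_left)
  then have "\<bar>x\<bar> powr p * (C * fp p 1 (y / x)) \<le> \<bar>x\<bar> powr p * fp p 1 (s * (y / x))"
    by (rule mult_left_mono) simp
  then show ?thesis
    using fp_homogeneous[OF False, where y=y] fp_homogeneous[OF False, where y="s * y"]
    by (simp add: mult.left_commute)
qed

lemma fp_scaled_upper_bound:
  assumes p: "1 < p" and C: "\<bar>s\<bar> powr p \<le> C"
    and normalized: "\<And>t. t \<noteq> 0 \<Longrightarrow> fp p 1 (s * t) \<le> C * fp p 1 t"
  shows "fp p x (s * y) \<le> C * fp p x y"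
proof (cases "x = 0")
  case True
  have "\<bar>s\<bar> powr p * fp p 0 y \<le> C * fp p 0 y"
    using C fp_nonneg[OF p] by (rule mult_right_mono)
  then show ?thesis
    using True by (simp add: fp_zero_left abs_mult powr_mult)
next
  case False
  have "fp p 1 (s * (y / x)) \<le> C * fp p 1 (y / x)"
    using normalized[of "y / x"] False by (cases "y = 0") (auto simp: fp_one_left)
  then have "\<bar>x\<bar> powr p * fp p 1 (s * (y / x)) \<le> \<bar>x\<bar> powr p * (C * fp p 1 (y / x))"
    by (rule mult_left_mono) simp
  then show ?thesis
    using fp_homogeneous[OF False, where y=y] fp_homogeneous[OF False, where y="s * y"]
    by (simp add: mult.left_commute)
qed

lemma fp_doubling_ratio_limits:
  assumes p: "1 < p"
  defines "F \<equiv> \<lambda>t. fp p 1 (2 * t) / fp p 1 t"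
  shows "continuous_on (- {0}) F"
    and "(F \<longlongrightarrow> 4) (at 0)" "(F \<longlongrightarrow> 2 powr p) at_top" "(F \<longlongrightarrow> 2 powr p) at_bot"
proof -
  show "continuous_on (- {0}) F"
    unfolding F_def using fp_pos[OF p, of _ 1] p
    by (intro continuous_on_divide continuous_on_compose2[OF continuous_on_fp[where x=1 and A=UNIV]]
        continuous_intros) (auto simp: less_imp_neq[symmetric])
  show "(F \<longlongrightarrow> 4) (at 0)"
    unfolding F_def fp_one_left using p by (intro filterlim_split_at; real_asymp)
  show "(F \<longlongrightarrow> 2 powr p) at_top" "(F \<longlongrightarrow> 2 powr p) at_bot"
    unfolding F_def fp_one_left using p by real_asymp+
qed

lemma fp_doubling_lower_bound:
  assumes p: "1 < p"
  shows "\<exists>\<Lambda>>2. \<forall>x y. \<Lambda> * fp p x y \<le> fp p x (2 * y)"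
proof -
  have two_less: "2 < (2::real) powr p"
    using powr_less_mono[OF p, of 2] by simp
  have ratio_gt: "2 < fp p 1 (2 * t) / fp p 1 t" if "t \<noteq> 0" for t
    using fp_double_gt[OF p that] fp_pos[OF p that] by (simp add: pos_less_divide_eq)
  obtain c where c: "2 < c" "\<And>t. t \<noteq> 0 \<Longrightarrow> c \<le> fp p 1 (2 * t) / fp p 1 t"
    by (rule continuous_on_punctured_line_strict_lower_bound[OF fp_doubling_ratio_limits(1)[OF p]
          ratio_gt fp_doubling_ratio_limits(2-4)[OF p] _ two_less two_less]) auto
  have "min c (2 powr p) * fp p x y \<le> fp p x (2 * y)" for x y
  proof (rule fp_scaled_lower_bound[OF p])
    fix t :: real
    assume "t \<noteq> 0"
    have "min c (2 powr p) * fp p 1 t \<le> c * fp p 1 t"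
      using fp_nonneg[OF p] by (intro mult_right_mono) auto
    also have "\<dots> \<le> fp p 1 (2 * t)"
      using c(2)[OF \<open>t \<noteq> 0\<close>] fp_pos[OF p \<open>t \<noteq> 0\<close>] by (simp add: pos_le_divide_eq)
    finally show "min c (2 powr p) * fp p 1 t \<le> fp p 1 (2 * t)" .
  qed simp
  then show ?thesis
    using c(1) two_less by (intro exI[of _ "min c (2 powr p)"]) auto
qed

lemma fp_doubling_upper_bound:
  assumes p: "1 < p"
  shows "\<exists>T>0. \<forall>x y. fp p x (2 * y) \<le> T * fp p x y"
proof -
  obtain M where M: "\<And>t. t \<noteq> 0 \<Longrightarrow> fp p 1 (2 * t) / fp p 1 t \<le> M"
    using continuous_on_punctured_line_bounded_above[OF fp_doubling_ratio_limits[OF p]] by blast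
  have "fp p x (2 * y) \<le> max M (2 powr p) * fp p x y" for x y
  proof (rule fp_scaled_upper_bound[OF p])
    fix t :: real
    assume "t \<noteq> 0"
    have "fp p 1 (2 * t) \<le> M * fp p 1 t"
      using M[OF \<open>t \<noteq> 0\<close>] fp_pos[OF p \<open>t \<noteq> 0\<close>] by (simp add: pos_divide_le_eq)
    also have "\<dots> \<le> max M (2 powr p) * fp p 1 t"
      using fp_nonneg[OF p] by (intro mult_right_mono) auto
    finally show "fp p 1 (2 * t) \<le> max M (2 powr p) * fp p 1 t" .
  qed simp
  then show ?thesis
    by (intro exI[of _ "max M (2 powr p)"]) (auto simp: less_max_iff_disj)
qed

lemma fp_reflection_bound:
  assumes p: "1 < p"
  shows "\<exists>K>0. \<forall>x y. fp p x y \<le> K * fp p x (- y)"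
proof -
  define G where "G t = fp p 1 (- t) / fp p 1 t" for t
  have "continuous_on (- {0}) G"
    unfolding G_def using fp_pos[OF p, of _ 1] p
    by (intro continuous_on_divide continuous_on_compose2[OF continuous_on_fp[where x=1 and A=UNIV]]
        continuous_intros) (auto simp: less_imp_neq[symmetric])
  moreover have "(G \<longlongrightarrow> 1) (at 0)"
    unfolding G_def fp_one_left using p by (intro filterlim_split_at; real_asymp)
  moreover have "(G \<longlongrightarrow> 1) at_top" "(G \<longlongrightarrow> 1) at_bot"
    unfolding G_def fp_one_left using p by real_asymp+
  ultimately obtain N where N: "\<And>t. t \<noteq> 0 \<Longrightarrow> G t \<le> N"
    using continuous_on_punctured_line_bounded_above[of 0 G] by blast
  have "fp p x (- 1 * y) \<le> max N 1 * fp p x y" for x y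
  proof (rule fp_scaled_upper_bound[OF p])
    fix t :: real
    assume "t \<noteq> 0"
    have "fp p 1 (- t) \<le> N * fp p 1 t"
      using N[OF \<open>t \<noteq> 0\<close>] fp_pos[OF p \<open>t \<noteq> 0\<close>] by (simp add: G_def pos_divide_le_eq)
    also have "\<dots> \<le> max N 1 * fp p 1 t"
      using fp_nonneg[OF p] by (intro mult_right_mono) auto
    finally show "fp p 1 (- 1 * t) \<le> max N 1 * fp p 1 t" by simp
  qed simp
  then have "fp p x y \<le> max N 1 * fp p x (- y)" for x y
    using minus_minus[of y] by (metis mult_minus1)
  then show ?thesis
    by (intro exI[of _ "max N 1"]) auto
qed

theorem lemma6p8:
  fixes p :: real
  assumes "1 < p"
  shows "(\<exists>\<Lambda>>2. \<forall>x y. fp p x (2 * y) \<ge> \<Lambda> * fp p x y)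
       \<and> (\<exists>T>0. \<forall>x y. fp p x (2 * y) \<le> T * fp p x y)
       \<and> (\<exists>K>0. \<forall>x y. fp p x y \<le> K * fp p x (- y))"
  using fp_doubling_lower_bound[OF assms] fp_doubling_upper_bound[OF assms] fp_reflection_bound[OF assms]
  by blast

end
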